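(* Let $b\ge 1$ be an integer and let $c\in\mathbb{R}$ be a fixed critical value (depending only on $b$, not on $l$). For each integer $l\ge 1$ let $D_1(l),\dots,D_b(l)$ be real random variables on a probability space with probability measure $\mathbb{P}$, where $\mathbb{P}$ is the distribution under which the alternative hypothesis $H_{1j}$ for the fixed candidate feature $f_j$ holds. Assume: (A1) almost surely, $D_i(l+1)\le D_i(l)$ for all $i\in\{1,\dots,b\}$ and all $l\ge 1$; (A2) almost surely, for every $l$, all $D_i(l)$ are nonzero and the absolute values $|D_1(l)|,\dots,|D_b(l)|$ are pairwise distinct. Let $T^+(l)=\sum_{i=1}^b R_i(l)\,\mathbf{1}\{D_i(l)>0\}$, where $R_i(l)$ is the rank of $|D_i(l)|$ among $\{|D_1(l)|,\dots,|D_b(l)|\}$ (rank $1$ for the smallest). Define the power $\beta_j(l)=\mathbb{P}\big(T^+(l)\ge c\big)$. Then for every $l\ge 1$, \[\beta_j(l+1)\le \beta_j(l).\]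
   Context: Setting: a response $Y$ and candidate features $f_1,\dots,f_p$; the data are augmented with $l$ synthetic noise features $\varepsilon_1,\dots,\varepsilon_l$ drawn i.i.d. from a fixed distribution. For bootstrap replicate $i=1,\dots,b$, $I^{(i)}_j(l)$ is the importance score of $f_j$ and $I^{(i)}(\varepsilon_k;l)$ that of the $k$-th noise feature when $l$ noise features are included; $M^{(i)}(l)=\max_{1\le k\le l} I^{(i)}(\varepsilon_k;l)$ and $D_i(l)=I^{(i)}_j(l)-M^{(i)}(l)$. $T^+(l)$ is the one-sided Wilcoxon signed-rank statistic computed from $\{D_i(l)\}_{i=1}^b$, and the test rejects $H_{0j}: Y\perp\!\!\!\perp f_j$ in favor of $H_{1j}: Y\not\perp\!\!\!\perp f_j$ when $T^+(l)\ge c$, with $c=c_\alpha(b)$ the Wilcoxon critical value at level $\alpha$. *)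

theory Defs
  imports "HOL-Probability.Probability"
begin

definition abs_rank :: "nat \<Rightarrow> (nat \<Rightarrow> real) \<Rightarrow> nat \<Rightarrow> nat" where
  "abs_rank b x i = card {k \<in> {1..b}. \<bar>x k\<bar> \<le> \<bar>x i\<bar>}"

definition wilcoxon_Tplus :: "nat \<Rightarrow> (nat \<Rightarrow> real) \<Rightarrow> real" where
  "wilcoxon_Tplus b x = (\<Sum>i\<in>{1..b}. real (abs_rank b x i) * (if x i > 0 then 1 else 0))"

end

theory Submission
  imports Defs
begin

text \<open>Without ties, T+ is Tukey's Walsh-average count: a pair i, j contributes a positive
  average (x i + x j)/2 exactly when the entry of larger absolute value is positive, so
  2 T+ counts the ordered pairs with x i + x j > 0 plus the positive entries. This count
  is monotone in every x i, so decreasing all differences can only decrease T+, and the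
  event T+ \<ge> c shrinks almost surely.\<close>

lemma abs_rank_eq_sum:
  "real (abs_rank b x i) = (\<Sum>j\<in>{1..b}. of_bool (\<bar>x j\<bar> \<le> \<bar>x i\<bar>))"
proof -
  have "real (abs_rank b x i) = (\<Sum>j\<in>{j \<in> {1..b}. \<bar>x j\<bar> \<le> \<bar>x i\<bar>}. 1)"
    unfolding abs_rank_def by simp
  also have "\<dots> = (\<Sum>j\<in>{1..b}. of_bool (\<bar>x j\<bar> \<le> \<bar>x i\<bar>))"
    by (simp only: sum.inter_filter finite_atLeastAtMost of_bool_def)
  finally show ?thesis .
qed

lemma wilcoxon_Tplus_eq_double_sum:
  "wilcoxon_Tplus b x = (\<Sum>i\<in>{1..b}. \<Sum>j\<in>{1..b}. of_bool (\<bar>x j\<bar> \<le> \<bar>x i\<bar> \<and> 0 < x i))"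
  unfolding wilcoxon_Tplus_def abs_rank_eq_sum of_bool_def[symmetric]
  by (simp only: of_bool_conj sum_distrib_right)

lemma of_bool_add_pos_by_dominant:
  fixes u v :: real
  assumes "\<bar>u\<bar> \<noteq> \<bar>v\<bar>"
  shows "of_bool (\<bar>v\<bar> \<le> \<bar>u\<bar> \<and> 0 < u) + of_bool (\<bar>u\<bar> \<le> \<bar>v\<bar> \<and> 0 < v)
    = (of_bool (0 < u + v) :: real)"
  using assms by (auto simp: abs_if)

lemma wilcoxon_Tplus_eq_Walsh_count:
  assumes "inj_on (\<lambda>i. \<bar>x i\<bar>) {1..b}"
  shows "2 * wilcoxon_Tplus b x =
    (\<Sum>i\<in>{1..b}. \<Sum>j\<in>{1..b}. of_bool (0 < x i + x j)) + (\<Sum>i\<in>{1..b}. of_bool (0 < x i))"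
proof -
  define g where "g i j = (of_bool (\<bar>x j\<bar> \<le> \<bar>x i\<bar> \<and> 0 < x i) :: real)" for i j
  have pair: "g i j + g j i = of_bool (0 < x i + x j) + of_bool (i = j \<and> 0 < x i)"
    if "i \<in> {1..b}" "j \<in> {1..b}" for i j
  proof (cases "i = j")
    case True
    then show ?thesis by (simp add: g_def)
  next
    case False
    with assms that have "\<bar>x i\<bar> \<noteq> \<bar>x j\<bar>" by (auto dest: inj_onD)
    with False show ?thesis unfolding g_def by (simp add: of_bool_add_pos_by_dominant)
  qed
  have diagonal: "(\<Sum>j\<in>{1..b}. of_bool (i = j \<and> 0 < x i) :: real) = of_bool (0 < x i)"
    if "i \<in> {1..b}" for i
    using that by (simp add: of_bool_def)
  have "2 * wilcoxon_Tplus b x = (\<Sum>i\<in>{1..b}. \<Sum>j\<in>{1..b}. g i j) + (\<Sum>i\<in>{1..b}. \<Sum>j\<in>{1..b}. g j i)"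
    using sum.swap[of g "{1..b}" "{1..b}"] by (simp add: wilcoxon_Tplus_eq_double_sum g_def)
  also have "\<dots> = (\<Sum>i\<in>{1..b}. \<Sum>j\<in>{1..b}. g i j + g j i)"
    by (simp add: sum.distrib)
  also have "\<dots> = (\<Sum>i\<in>{1..b}. \<Sum>j\<in>{1..b}. of_bool (0 < x i + x j) + of_bool (i = j \<and> 0 < x i))"
    by (intro sum.cong refl pair)
  also have "\<dots> = (\<Sum>i\<in>{1..b}. \<Sum>j\<in>{1..b}. of_bool (0 < x i + x j)) + (\<Sum>i\<in>{1..b}. of_bool (0 < x i))"
    by (simp only: sum.distrib diagonal cong: sum.cong)
  finally show ?thesis .
qed

lemma wilcoxon_Tplus_mono:
  assumes "inj_on (\<lambda>i. \<bar>x i\<bar>) {1..b}" "inj_on (\<lambda>i. \<bar>y i\<bar>) {1..b}"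
    and le: "\<And>i. i \<in> {1..b} \<Longrightarrow> x i \<le> y i"
  shows "wilcoxon_Tplus b x \<le> wilcoxon_Tplus b y"
proof -
  have pair: "of_bool (0 < x i + x j) \<le> (of_bool (0 < y i + y j) :: real)"
    if "i \<in> {1..b}" "j \<in> {1..b}" for i j
    using le[OF that(1)] le[OF that(2)] by simp
  have single: "of_bool (0 < x i) \<le> (of_bool (0 < y i) :: real)" if "i \<in> {1..b}" for i
    using le[OF that] by simp
  have "2 * wilcoxon_Tplus b x =
      (\<Sum>i\<in>{1..b}. \<Sum>j\<in>{1..b}. of_bool (0 < x i + x j)) + (\<Sum>i\<in>{1..b}. of_bool (0 < x i))"
    by (rule wilcoxon_Tplus_eq_Walsh_count[OF assms(1)])
  also have "\<dots> \<le>
      (\<Sum>i\<in>{1..b}. \<Sum>j\<in>{1..b}. of_bool (0 < y i + y j)) + (\<Sum>i\<in>{1..b}. of_bool (0 < y i))"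
    by (intro add_mono sum_mono pair single)
  also have "\<dots> = 2 * wilcoxon_Tplus b y"
    by (rule wilcoxon_Tplus_eq_Walsh_count[OF assms(2), symmetric])
  finally show ?thesis by simp
qed

lemma borel_measurable_wilcoxon_Tplus:
  assumes "\<And>i. i \<in> {1..b} \<Longrightarrow> X i \<in> borel_measurable M"
  shows "(\<lambda>\<omega>. wilcoxon_Tplus b (\<lambda>i. X i \<omega>)) \<in> borel_measurable M"
  unfolding wilcoxon_Tplus_eq_double_sum
proof (intro borel_measurable_sum)
  fix i j assume "i \<in> {1..b}" "j \<in> {1..b}"
  then have [measurable]: "X i \<in> borel_measurable M" "X j \<in> borel_measurable M"
    using assms by auto
  show "(\<lambda>\<omega>. of_bool (\<bar>X j \<omega>\<bar> \<le> \<bar>X i \<omega>\<bar> \<and> 0 < X i \<omega>) :: real) \<in> borel_measurable M"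
    by measurable
qed

lemma (in finite_measure) measure_superlevel_mono_AE:
  fixes f g :: "'a \<Rightarrow> real"
  assumes "AE \<omega> in M. f \<omega> \<le> g \<omega>" and "g \<in> borel_measurable M"
  shows "measure M {\<omega> \<in> space M. c \<le> f \<omega>} \<le> measure M {\<omega> \<in> space M. c \<le> g \<omega>}"
proof (rule finite_measure_mono_AE)
  show "AE \<omega> in M. \<omega> \<in> {\<omega> \<in> space M. c \<le> f \<omega>} \<longrightarrow> \<omega> \<in> {\<omega> \<in> space M. c \<le> g \<omega>}"
    using assms(1) by eventually_elim auto
  show "{\<omega> \<in> space M. c \<le> g \<omega>} \<in> sets M"
    using assms(2) by measurable
qed

theorem proposition5p2:
  fixes M :: "'a measure" and b :: nat and c :: real
    and D :: "nat \<Rightarrow> nat \<Rightarrow> 'a \<Rightarrow> real"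
  assumes "prob_space M"
    and "b \<ge> 1"
    and meas: "\<And>l i. l \<ge> 1 \<Longrightarrow> i \<in> {1..b} \<Longrightarrow> D l i \<in> borel_measurable M"
    and A1: "AE \<omega> in M. \<forall>l\<ge>1. \<forall>i\<in>{1..b}. D (Suc l) i \<omega> \<le> D l i \<omega>"
    and A2: "AE \<omega> in M. \<forall>l\<ge>1. \<forall>i\<in>{1..b}. D l i \<omega> \<noteq> 0 \<and>
               (\<forall>k\<in>{1..b}. k \<noteq> i \<longrightarrow> \<bar>D l i \<omega>\<bar> \<noteq> \<bar>D l k \<omega>\<bar>)"
    and "l \<ge> 1"
  shows "measure M {\<omega> \<in> space M. wilcoxon_Tplus b (\<lambda>i. D (Suc l) i \<omega>) \<ge> c}
         \<le> measure M {\<omega> \<in> space M. wilcoxon_Tplus b (\<lambda>i. D l i \<omega>) \<ge> c}"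
proof -
  interpret prob_space M by fact
  have no_ties: "inj_on (\<lambda>i. \<bar>D m i \<omega>\<bar>) {1..b}"
    if "\<forall>l\<ge>1. \<forall>i\<in>{1..b}. D l i \<omega> \<noteq> 0 \<and> (\<forall>k\<in>{1..b}. k \<noteq> i \<longrightarrow> \<bar>D l i \<omega>\<bar> \<noteq> \<bar>D l k \<omega>\<bar>)"
      and "m \<ge> 1" for m \<omega>
  proof (rule inj_onI)
    fix i k assume "i \<in> {1..b}" "k \<in> {1..b}" "\<bar>D m i \<omega>\<bar> = \<bar>D m k \<omega>\<bar>"
    with that show "i = k" by metis
  qed
  have "AE \<omega> in M. wilcoxon_Tplus b (\<lambda>i. D (Suc l) i \<omega>) \<le> wilcoxon_Tplus b (\<lambda>i. D l i \<omega>)"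
    using A1 A2
    by eventually_elim (use \<open>l \<ge> 1\<close> in \<open>auto intro!: wilcoxon_Tplus_mono no_ties\<close>)
  moreover have "(\<lambda>\<omega>. wilcoxon_Tplus b (\<lambda>i. D l i \<omega>)) \<in> borel_measurable M"
    using meas \<open>l \<ge> 1\<close> by (intro borel_measurable_wilcoxon_Tplus) auto
  ultimately show ?thesis
    by (rule measure_superlevel_mono_AE)
qed

end
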